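(* Let $P\subseteq[0,1]^d$ be a $d$-dimensional $0/1$-polytope. Then its number of facets satisfies $f_{d-1}(P)\le 2d+d!\,(1-\mathrm{Vol}_d(P))$, where $\mathrm{Vol}_d$ denotes $d$-dimensional Lebesgue volume.
   Context: A $0/1$-polytope is the convex hull of a subset of $\{0,1\}^d$; $f_{d-1}(P)$ is the number of facets of $P$. *)

theory Defs
  imports "HOL-Analysis.Analysis"
begin

definition cube01 :: "(real ^ 'n) set" where
  "cube01 = {x. \<forall>i. x $ i = 0 \<or> x $ i = 1}"

definition zero_one_polytope :: "(real ^ 'n) set \<Rightarrow> bool" where
  "zero_one_polytope P \<longleftrightarrow> (\<exists>V. V \<subseteq> cube01 \<and> P = convex hull V)"

end

theory Submission
  imports Defs
begin

text \<open>
  Split the facets of \<open>P\<close> into those lying in a coordinate hyperplane \<open>x\<^sub>i = 0\<close> or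
  \<open>x\<^sub>i = 1\<close> and the rest. Since \<open>P\<close> is full-dimensional, each of these \<open>2d\<close> hyperplanes
  contains at most one facet. For any other facet \<open>F\<close> some vertex of the cube lies strictly
  beyond the hyperplane of \<open>F\<close>: otherwise that hyperplane would support the cube, and the
  cube vertices on it share a coordinate. Let \<open>v\<^sub>F\<close> be the first such vertex in a fixed
  enumeration of the cube vertices. The pyramids \<open>conv (F \<union> {v\<^sub>F})\<close> lie in the unit cube,
  meet \<open>P\<close> and each other only in null sets (by the choice of the first vertex, two
  pyramids with different apexes are separated by one of the two facet hyperplanes), and each
  contains a full-dimensional lattice simplex, whose volume is a positive integer multiple
  of \<open>1/d!\<close>. Hence \<open>vol P + (number of such facets) / d! \<le> 1\<close>.
\<close>

section \<open>Lebesgue measure under a reindexing of coordinates\<close>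

(* The simplex volume formula content_simplex requires a well-ordered index type; 'a ordered
   is a well-ordered copy of a finite type, to which vec_reindex transports the problem. *)
typedef ('a::finite) ordered = "UNIV :: 'a set" by simp

instance ordered :: (finite) finite
  by standard (simp add: type_definition.univ[OF type_definition_ordered])

instantiation ordered :: (finite) linorder
begin
definition "x \<le> y \<longleftrightarrow> to_nat (Rep_ordered x) \<le> to_nat (Rep_ordered y)"
definition "x < y \<longleftrightarrow> to_nat (Rep_ordered x) < to_nat (Rep_ordered y)"
instance
proof
  fix x y :: "'a ordered"
  show "x \<le> y \<Longrightarrow> y \<le> x \<Longrightarrow> x = y"
    by (simp add: less_eq_ordered_def Rep_ordered_inject[symmetric])
qed (auto simp: less_eq_ordered_def less_ordered_def)
end

instance ordered :: (finite) wellorder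
proof
  fix P :: "'a ordered \<Rightarrow> bool" and a
  assume step: "\<And>x. (\<And>y. y < x \<Longrightarrow> P y) \<Longrightarrow> P x"
  show "P a"
  proof (induction a rule: measure_induct_rule[of "\<lambda>x. to_nat (Rep_ordered x)"])
    case (less x)
    then show ?case by (rule step) (simp add: less_ordered_def)
  qed
qed

lemma bij_Rep_ordered: "bij (Rep_ordered :: 'a::finite ordered \<Rightarrow> 'a)"
  by (metis bij_betw_def inj_on_def Rep_ordered_inject
      type_definition.Rep_range[OF type_definition_ordered])

lemma card_ordered: "CARD('a::finite ordered) = CARD('a)"
  using bij_betw_same_card[OF bij_Rep_ordered] by simp

definition vec_reindex :: "('m \<Rightarrow> 'n) \<Rightarrow> 'a^'n \<Rightarrow> 'a^'m" where
  "vec_reindex r x = (\<chi> j. x $ r j)"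

lemma vec_reindex_inv:
  assumes "bij r"
  shows "vec_reindex (inv r) (vec_reindex r x) = x"
    and "vec_reindex r (vec_reindex (inv r) y) = y"
  using assms
  by (simp_all add: vec_reindex_def vec_eq_iff bij_is_surj surj_f_inv_f bij_is_inj inv_f_f)

lemma inj_vec_reindex:
  assumes "bij r"
  shows "inj (vec_reindex r)"
  by (rule inj_on_inverseI[where g = "vec_reindex (inv r)"]) (simp add: vec_reindex_inv assms)

lemma linear_vec_reindex: "linear (vec_reindex r :: real^'n \<Rightarrow> real^'m)"
  by (auto simp: linear_iff vec_reindex_def vec_eq_iff)

lemma borel_measurable_vec_reindex:
  "(vec_reindex r :: real^'n::finite \<Rightarrow> real^'m::finite) \<in> borel_measurable borel"
  by (intro borel_measurable_continuous_onI linear_continuous_on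
      linear_conv_bounded_linear[THEN iffD1] linear_vec_reindex)

lemma image_vec_reindex:
  assumes "bij r"
  shows "vec_reindex r ` S = vec_reindex (inv r) -` S"
proof (intro set_eqI iffI)
  fix y assume "y \<in> vec_reindex r ` S"
  then show "y \<in> vec_reindex (inv r) -` S"
    by (auto simp: vec_reindex_inv(1)[OF assms])
next
  fix y assume "y \<in> vec_reindex (inv r) -` S"
  then show "y \<in> vec_reindex r ` S"
    using vec_reindex_inv(2)[OF assms, of y] by (metis imageI vimageE)
qed

lemma prod_Basis_vec: "(\<Prod>b\<in>Basis. (x::real^'n) \<bullet> b) = (\<Prod>i\<in>UNIV. x $ i)"
  by (simp add: Basis_vec_def prod.UNION_disjoint axis_eq_axis inner_axis)

lemma emeasure_lborel_box_cart:
  fixes a b :: "real^'n"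
  assumes "\<And>i. a $ i \<le> b $ i"
  shows "emeasure lborel (box a b) = ennreal (\<Prod>i\<in>UNIV. b $ i - a $ i)"
proof -
  have "\<forall>k\<in>Basis. a \<bullet> k \<le> b \<bullet> k"
    using assms by (auto simp: Basis_vec_def inner_axis)
  then show ?thesis
    using prod_Basis_vec[of "b - a"] by (simp add: emeasure_lborel_box_eq)
qed

lemma vimage_vec_reindex_box:
  fixes r :: "'m::finite \<Rightarrow> 'n::finite" and l u :: "real^'m"
  assumes r: "bij r"
  shows "vec_reindex r -` box l u = box (vec_reindex (inv r) l) (vec_reindex (inv r) u)"
proof (intro set_eqI)
  fix x :: "real^'n"
  have "(\<forall>j. l $ j < x $ r j \<and> x $ r j < u $ j) \<longleftrightarrow>
        (\<forall>i. l $ inv r i < x $ i \<and> x $ i < u $ inv r i)"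
  proof (intro iffI allI)
    fix i assume "\<forall>j. l $ j < x $ r j \<and> x $ r j < u $ j"
    then have "l $ inv r i < x $ r (inv r i) \<and> x $ r (inv r i) < u $ inv r i" by blast
    then show "l $ inv r i < x $ i \<and> x $ i < u $ inv r i"
      using r by (simp add: bij_is_surj surj_f_inv_f)
  next
    fix j assume "\<forall>i. l $ inv r i < x $ i \<and> x $ i < u $ inv r i"
    then have "l $ inv r (r j) < x $ r j \<and> x $ r j < u $ inv r (r j)" by blast
    then show "l $ j < x $ r j \<and> x $ r j < u $ j"
      using r by (simp add: bij_is_inj inv_f_f)
  qed
  then show "x \<in> vec_reindex r -` box l u \<longleftrightarrow>
      x \<in> box (vec_reindex (inv r) l) (vec_reindex (inv r) u)"
    by (simp add: mem_box_cart vec_reindex_def)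
qed

lemma distr_lborel_vec_reindex:
  fixes r :: "'m::finite \<Rightarrow> 'n::finite"
  assumes r: "bij r"
  shows "distr lborel borel (vec_reindex r :: real^'n \<Rightarrow> real^'m) = lborel"
proof (rule lborel_eqI[symmetric])
  fix l u :: "real^'m"
  assume le: "\<And>b. b \<in> Basis \<Longrightarrow> l \<bullet> b \<le> u \<bullet> b"
  have lu: "l $ j \<le> u $ j" for j
    using le[of "axis j 1"] by (auto simp: Basis_vec_def inner_axis)
  have [measurable]: "vec_reindex r \<in> borel_measurable (borel :: (real^'n) measure)"
    by (rule borel_measurable_vec_reindex)
  have "vec_reindex r -` box l u = box (vec_reindex (inv r) l) (vec_reindex (inv r) u)"
    using r by (rule vimage_vec_reindex_box)
  then have "emeasure (distr lborel borel (vec_reindex r)) (box l u)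
      = ennreal (\<Prod>i\<in>UNIV. u $ inv r i - l $ inv r i)"
    using lu by (simp add: emeasure_distr emeasure_lborel_box_cart vec_reindex_def)
  also have "(\<Prod>i\<in>UNIV. u $ inv r i - l $ inv r i) = (\<Prod>j\<in>UNIV. u $ j - l $ j)"
    using prod.reindex_bij_betw[OF bij_imp_bij_inv[OF r], of "\<lambda>j. u $ j - l $ j"] by simp
  finally show "emeasure (distr lborel borel (vec_reindex r)) (box l u)
      = (\<Prod>b\<in>Basis. (u - l) \<bullet> b)"
    by (simp only: prod_Basis_vec vector_minus_component)
qed (rule sets_distr)

lemma measure_vec_reindex_image:
  fixes r :: "'m::finite \<Rightarrow> 'n::finite" and S :: "(real^'n) set"
  assumes r: "bij r" and S: "S \<in> sets borel"
  shows "measure lebesgue (vec_reindex r ` S) = measure lebesgue S"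
proof -
  have [measurable]: "vec_reindex (inv r) \<in> borel_measurable (borel :: (real^'m) measure)"
    by (rule borel_measurable_vec_reindex)
  have pre: "vec_reindex r ` S = vec_reindex (inv r) -` S"
    using r by (rule image_vec_reindex)
  have "measure lborel S = measure (distr lborel borel (vec_reindex (inv r))) S"
    by (simp add: distr_lborel_vec_reindex bij_imp_bij_inv[OF r])
  also have "\<dots> = measure lborel (vec_reindex r ` S)"
    using S by (simp add: measure_distr pre)
  moreover have "vec_reindex (inv r) -` S \<in> sets borel"
    by (rule measurable_sets_borel[OF borel_measurable_vec_reindex S])
  ultimately show ?thesis
    using S by (simp add: pre measure_completion)
qed

section \<open>Volume of lattice polytopes\<close>

definition integer_points :: "(real^'n) set" where
  "integer_points = {x. \<forall>i. x $ i \<in> \<int>}"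

lemma det_in_Ints:
  fixes A :: "real^'n::finite^'n"
  assumes "\<And>i j. A $ i $ j \<in> \<int>"
  shows "det A \<in> \<int>"
  unfolding det_def by (intro Ints_sum Ints_mult Ints_prod) (auto simp: assms)

lemma measure_convex_hull_pos:
  fixes X :: "'a::euclidean_space set"
  assumes "finite X" "aff_dim X = DIM('a)"
  shows "0 < measure lebesgue (convex hull X)"
proof -
  have "affine hull (convex hull X) = UNIV"
    using assms(2) by (simp add: aff_dim_eq_full affine_hull_convex_hull)
  then have "rel_interior (convex hull X) = interior (convex hull X)"
    by (rule rel_interior_interior)
  moreover have "X \<noteq> {}"
    using assms(2) by auto
  then have "rel_interior (convex hull X) \<noteq> {}"
    by (simp add: rel_interior_eq_empty convex_convex_hull)
  ultimately have "\<not> negligible (convex hull X)"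
    by (simp add: negligible_convex_interior convex_convex_hull)
  moreover have "convex hull X \<in> lmeasurable"
    using assms(1) by (intro lmeasurable_compact finite_imp_compact_convex_hull)
  ultimately have "measure lebesgue (convex hull X) \<noteq> 0"
    by (simp add: negligible_iff_measure0)
  then show ?thesis
    using measure_nonneg[of lebesgue "convex hull X"] by linarith
qed

lemma lattice_simplex_measure_ge_wellorder:
  fixes X :: "(real^'n::{finite,wellorder}) set"
  assumes fin: "finite X" and card: "card X = Suc CARD('n)"
    and indep: "\<not> affine_dependent X" and lattice: "X \<subseteq> integer_points"
  shows "1 / fact CARD('n) \<le> measure lebesgue (convex hull X)"
proof -
  obtain x0 where x0: "x0 \<in> X"
    using card by fastforce
  have "card (X - {x0}) = CARD('n)"
    using card x0 fin by simp
  then obtain f where f: "bij_betw f (UNIV::'n set) (X - {x0})"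
    using finite_same_card_bij[of "UNIV::'n set" "X - {x0}"] fin by auto
  define M where "M = (\<chi> i. \<chi> j. f j $ i - x0 $ i)"
  have vol: "measure lebesgue (convex hull X) = \<bar>det M\<bar> / fact CARD('n)"
  proof -
    have "convex hull X \<in> sets borel"
      using fin by (intro borel_closed compact_imp_closed finite_imp_compact_convex_hull)
    then show ?thesis
      using content_simplex[OF fin card x0 f] by (simp add: M_def measure_completion)
  qed
  have "det M \<in> \<int>"
  proof (rule det_in_Ints)
    fix i j
    have "f j \<in> X" using f by (auto simp: bij_betw_def)
    then show "M $ i $ j \<in> \<int>"
      using x0 lattice by (auto simp: M_def integer_points_def subset_eq intro!: Ints_diff)
  qed
  moreover have "aff_dim X = CARD('n)"
    using indep card by (simp add: affine_independent_iff_card)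
  then have "det M \<noteq> 0"
    using measure_convex_hull_pos[OF fin] vol by auto
  ultimately have "1 \<le> \<bar>det M\<bar>"
    by (rule Ints_nonzero_abs_ge1)
  then show ?thesis
    using vol by (simp add: divide_right_mono)
qed

lemma lattice_polytope_measure_ge_wellorder:
  fixes X :: "(real^'n::{finite,wellorder}) set"
  assumes fin: "finite X" and full: "aff_dim X = CARD('n)"
    and lattice: "X \<subseteq> integer_points"
  shows "1 / fact CARD('n) \<le> measure lebesgue (convex hull X)"
proof -
  obtain B where B: "B \<subseteq> X" "\<not> affine_dependent B" "affine hull X = affine hull B"
    using affine_basis_exists[of X] by blast
  have "aff_dim B = CARD('n)"
    using B(3) full by (metis aff_dim_affine_hull)
  then have "finite B" "card B = Suc CARD('n)"
    using B(2) by (simp_all add: affine_independent_iff_card)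
  then have "1 / fact CARD('n) \<le> measure lebesgue (convex hull B)"
    using B lattice by (intro lattice_simplex_measure_ge_wellorder) auto
  also have "\<dots> \<le> measure lebesgue (convex hull X)"
  proof (rule measure_mono_fmeasurable)
    show "convex hull B \<subseteq> convex hull X"
      using B(1) by (rule hull_mono)
    show "convex hull B \<in> sets lebesgue"
      using \<open>finite B\<close> by (intro fmeasurableD lmeasurable_compact finite_imp_compact_convex_hull)
    show "convex hull X \<in> lmeasurable"
      using fin by (intro lmeasurable_compact finite_imp_compact_convex_hull)
  qed
  finally show ?thesis .
qed

lemma lattice_polytope_measure_ge:
  fixes X :: "(real^'n::finite) set"
  assumes fin: "finite X" and full: "aff_dim X = CARD('n)"
    and lattice: "X \<subseteq> integer_points"
  shows "1 / fact CARD('n) \<le> measure lebesgue (convex hull X)"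
proof -
  let ?r = "Rep_ordered :: 'n ordered \<Rightarrow> 'n"
  let ?\<phi> = "vec_reindex ?r :: real^'n \<Rightarrow> real^'n ordered"
  have "1 / fact CARD('n ordered) \<le> measure lebesgue (convex hull (?\<phi> ` X))"
  proof (rule lattice_polytope_measure_ge_wellorder)
    show "finite (?\<phi> ` X)"
      using fin by simp
    have "aff_dim (?\<phi> ` X) = aff_dim X"
      by (rule aff_dim_injective_linear_image[OF linear_vec_reindex inj_vec_reindex[OF bij_Rep_ordered]])
    then show "aff_dim (?\<phi> ` X) = CARD('n ordered)"
      using full by (simp add: card_ordered)
    show "?\<phi> ` X \<subseteq> integer_points"
      using lattice by (auto simp: vec_reindex_def integer_points_def)
  qed
  also have "convex hull (?\<phi> ` X) = ?\<phi> ` (convex hull X)"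
    by (rule convex_hull_linear_image[OF linear_vec_reindex, symmetric])
  also have "measure lebesgue (?\<phi> ` (convex hull X)) = measure lebesgue (convex hull X)"
    using fin by (intro measure_vec_reindex_image bij_Rep_ordered borel_closed compact_imp_closed
        finite_imp_compact_convex_hull)
  finally show ?thesis
    by (simp add: card_ordered)
qed

lemma lattice_pyramid_measure_ge:
  fixes V :: "(real^'n::finite) set"
  assumes "finite V" "V \<subseteq> integer_points" "F face_of convex hull V"
    and "aff_dim F = int CARD('n) - 1"
    and "w \<in> integer_points" "w \<notin> affine hull F"
  shows "1 / fact CARD('n) \<le> measure lebesgue (convex hull (insert w F))"
proof -
  obtain S where S: "S \<subseteq> V" "F = convex hull S"
    using face_of_convex_hull_subset[OF finite_imp_compact[OF assms(1)] assms(3)] by blast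
  have "aff_dim (insert w S) = CARD('n)"
    using assms(4,6) S(2) by (simp add: aff_dim_insert aff_dim_convex_hull affine_hull_convex_hull)
  moreover have "convex hull (insert w F) = convex hull (insert w S)"
    using S(2) by (metis hull_insert)
  moreover have "finite (insert w S)"
    using S(1) assms(1) finite_subset by blast
  moreover have "insert w S \<subseteq> integer_points"
    using S(1) assms(2,5) by blast
  ultimately show ?thesis
    using lattice_polytope_measure_ge by metis
qed

section \<open>Facets lying in facets of the cube\<close>

definition in_cube_facet :: "(real^'n) set \<Rightarrow> bool" where
  "in_cube_facet F \<longleftrightarrow> (\<exists>i. \<exists>c\<in>{0,1}. F \<subseteq> {x. x $ i = c})"

lemma cube01_nth: "x \<in> cube01 \<Longrightarrow> x $ i \<in> {0, 1}"
  by (simp add: cube01_def)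

lemma finite_cube01: "finite (cube01 :: (real^'n::finite) set)"
proof (rule finite_subset)
  show "(cube01 :: (real^'n) set) \<subseteq> vec_lambda ` (UNIV \<rightarrow>\<^sub>E {0, 1})"
  proof
    fix x :: "real^'n" assume "x \<in> cube01"
    then have "vec_nth x \<in> UNIV \<rightarrow>\<^sub>E {0, 1}"
      by (auto simp: cube01_def)
    then show "x \<in> vec_lambda ` (UNIV \<rightarrow>\<^sub>E {0, 1})"
      by (rule rev_image_eqI) simp
  qed
qed (intro finite_imageI finite_PiE; simp)

lemma cube01_subset_unit_cube: "cube01 \<subseteq> cbox 0 (1 :: real^'n::finite)"
proof
  fix x :: "real^'n" assume x: "x \<in> cube01"
  show "x \<in> cbox 0 1"
    unfolding mem_box_cart
  proof
    fix i show "0 $ i \<le> x $ i \<and> x $ i \<le> 1 $ i"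
      using cube01_nth[OF x, of i] by auto
  qed
qed

lemma measure_unit_cube: "measure lebesgue (cbox 0 (1 :: real^'n::finite)) = 1"
proof -
  have "(0::real^'n) \<in> cbox 0 1"
    by (simp add: mem_box_cart)
  then have "measure lborel (cbox 0 (1::real^'n)) = 1"
    using content_cbox_cart[of "0::real^'n" 1] by auto
  then show ?thesis
    by (simp add: measure_completion)
qed

lemma cube01_subset_integer_points: "cube01 \<subseteq> integer_points"
  by (auto simp: cube01_def integer_points_def) (metis Ints_0 Ints_1)

lemma zero_one_polytope_subset_unit_cube:
  "zero_one_polytope P \<Longrightarrow> P \<subseteq> cbox 0 (1 :: real^'n::finite)"
  unfolding zero_one_polytope_def
  using cube01_subset_unit_cube by (metis convex_box(1) hull_minimal subset_trans)

lemma zero_one_polytope_imp_polytope: "zero_one_polytope P \<Longrightarrow> polytope P"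
  unfolding zero_one_polytope_def polytope_def using finite_cube01 finite_subset by blast

lemma convex_coordinate_hyperplane: "convex {x::real^'n::finite. x $ i = c}"
  using convex_hyperplane[of "axis i (1::real)" c] by (simp add: inner_axis')

lemma cube01_on_supporting_hyperplane:
  fixes a :: "real^'n::finite"
  assumes "a \<noteq> 0" and below: "cube01 \<subseteq> {x. a \<bullet> x \<le> b}"
  shows "in_cube_facet (cube01 \<inter> {x. a \<bullet> x = b})"
proof -
  obtain i where ai: "a $ i \<noteq> 0"
    using assms(1) by (metis vec_eq_iff zero_index)
  define c :: real where "c = (if a $ i > 0 then 1 else 0)"
  have "w $ i = c" if w: "w \<in> cube01" "a \<bullet> w = b" for w
  proof (rule ccontr)
    \<comment> \<open>flipping coordinate \<open>i\<close> of \<open>w\<close> would move it strictly beyond the hyperplane\<close>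
    assume ne: "w $ i \<noteq> c"
    define w' where "w' = w + (1 - 2 * w $ i) *\<^sub>R axis i 1"
    have "w' $ j = (if j = i then 1 - w $ i else w $ j)" for j
      by (simp add: w'_def axis_def)
    then have "w' \<in> cube01"
      using w(1) by (auto simp: cube01_def)
    moreover have "(1 - 2 * w $ i) * a $ i > 0"
      using w(1) ne ai by (auto simp: cube01_def c_def split: if_splits dest!: spec[of _ i])
    then have "a \<bullet> w' > b"
      using w(2) by (simp add: w'_def inner_add_right inner_axis)
    ultimately show False
      using below by auto
  qed
  then show ?thesis
    unfolding in_cube_facet_def c_def by (intro exI[of _ i] bexI[of _ c]) (auto simp: c_def)
qed

lemma ex_cube01_beyond_face:
  fixes V :: "(real^'n::finite) set"
  assumes "V \<subseteq> cube01" "F face_of convex hull V"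
    and "a \<noteq> 0" "F \<subseteq> {x. a \<bullet> x = b}" and "\<not> in_cube_facet F"
  shows "\<exists>w\<in>cube01. a \<bullet> w > b"
proof (rule ccontr)
  assume "\<not> (\<exists>w\<in>cube01. a \<bullet> w > b)"
  then have below: "cube01 \<subseteq> {x. a \<bullet> x \<le> b}"
    by (auto simp: not_less)
  obtain S where S: "S \<subseteq> V" "F = convex hull S"
    using face_of_convex_hull_subset[OF finite_imp_compact[OF finite_subset[OF assms(1) finite_cube01]]
        assms(2)] by blast
  have "S \<subseteq> cube01 \<inter> {x. a \<bullet> x = b}"
    using S assms(1,4) hull_subset[of S convex] by blast
  then obtain i c where "c \<in> {0,1}" "S \<subseteq> {x. x $ i = c}"
    using cube01_on_supporting_hyperplane[OF assms(3) below] unfolding in_cube_facet_def by blast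
  moreover from this(2) have "convex hull S \<subseteq> {x. x $ i = c}"
    using convex_coordinate_hyperplane by (rule hull_minimal)
  ultimately show False
    using assms(5) unfolding in_cube_facet_def S(2) by blast
qed

lemma facet_of_unique_in_supporting_hyperplane:
  fixes P :: "'a::euclidean_space set"
  assumes P: "convex P" "P \<subseteq> {x. a \<bullet> x \<le> b}" "\<not> P \<subseteq> {x. a \<bullet> x = b}"
    and "F facet_of P" "G facet_of P" "F \<subseteq> {x. a \<bullet> x = b}" "G \<subseteq> {x. a \<bullet> x = b}"
  shows "F = G"
proof -
  define E where "E = P \<inter> {x. a \<bullet> x = b}"
  have E: "E face_of P"
    unfolding E_def using P(1,2) by (intro face_of_Int_supporting_hyperplane_le) auto
  moreover have "E \<noteq> P"
    using P(3) by (auto simp: E_def)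
  ultimately have E_lt: "aff_dim E < aff_dim P"
    using face_of_aff_dim_lt[OF P(1)] by blast
  have "H = E" if H: "H facet_of P" "H \<subseteq> {x. a \<bullet> x = b}" for H
  proof (rule ccontr)
    assume "H \<noteq> E"
    moreover have "H face_of E"
      using H E face_of_subset[of H P E] by (auto simp: E_def facet_of_def dest: face_of_imp_subset)
    ultimately have "aff_dim H < aff_dim E"
      using face_of_aff_dim_lt face_of_imp_convex[OF E] by blast
    then show False
      using E_lt H(1) by (simp add: facet_of_def)
  qed
  then show ?thesis
    using assms(4-7) by blast
qed

lemma unit_cube_coordinate_support:
  assumes "c \<in> {0, 1}"
  obtains a b where "a \<noteq> 0" "cbox 0 1 \<subseteq> {x. a \<bullet> x \<le> b}"
    "{x. a \<bullet> x = b} = {x::real^'n::finite. x $ i = c}"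
proof (cases "c = 0")
  case True
  show ?thesis
    by (rule that[of "- axis i 1" 0]) (auto simp: True axis_eq_0_iff mem_box_cart inner_axis')
next
  case False
  then have "c = 1"
    using assms by simp
  show ?thesis
    by (rule that[of "axis i 1" 1]) (auto simp: \<open>c = 1\<close> axis_eq_0_iff mem_box_cart inner_axis')
qed

lemma card_facets_in_cube_facets_le:
  fixes P :: "(real^'n::finite) set"
  assumes P: "polytope P" "P \<subseteq> cbox 0 1" "aff_dim P = CARD('n)"
  shows "card {F. F facet_of P \<and> in_cube_facet F} \<le> 2 * CARD('n)"
proof -
  define A where "A = (\<lambda>(i, c). {F. F facet_of P \<and> F \<subseteq> {x. x $ i = c}})"
  have "card (A (i, c)) \<le> 1" if c: "c \<in> {0, 1}" for i c
  proof -
    obtain a b where ab: "a \<noteq> 0" "cbox 0 1 \<subseteq> {x. a \<bullet> x \<le> b}"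
        "{x. a \<bullet> x = b} = {x. x $ i = c}"
      using unit_cube_coordinate_support[OF c] by blast
    have Pa: "P \<subseteq> {x. a \<bullet> x \<le> b}"
      using P(2) ab(2) by blast
    have nsub: "\<not> P \<subseteq> {x. a \<bullet> x = b}"
    proof
      assume "P \<subseteq> {x. a \<bullet> x = b}"
      then have "aff_dim P \<le> aff_dim {x. a \<bullet> x = b}"
        by (rule aff_dim_subset)
      then show False
        using ab(1) P(3) by simp
    qed
    have "F = G" if "F \<in> A (i, c)" "G \<in> A (i, c)" for F G
      using facet_of_unique_in_supporting_hyperplane[OF polytope_imp_convex[OF P(1)] Pa nsub] that ab(3)
      by (auto simp: A_def)
    moreover have "finite (A (i, c))"
      using finite_polytope_facets[OF P(1)] by (rule rev_finite_subset) (auto simp: A_def)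
    ultimately show ?thesis
      by (simp add: card_le_Suc0_iff_eq)
  qed
  have "{F. F facet_of P \<and> in_cube_facet F} = (\<Union>p\<in>UNIV \<times> {0, 1}. A p)"
    by (auto simp: in_cube_facet_def A_def)
  then have "card {F. F facet_of P \<and> in_cube_facet F} \<le> (\<Sum>p\<in>UNIV \<times> {0, 1}. card (A p))"
    by (simp add: card_UN_le)
  also have "\<dots> \<le> (\<Sum>p\<in>(UNIV :: 'n set) \<times> {0::real, 1}. 1)"
    by (rule sum_mono) (use \<open>\<And>i c. c \<in> {0, 1} \<Longrightarrow> card (A (i, c)) \<le> 1\<close> in auto)
  also have "\<dots> = 2 * CARD('n)"
    by (simp add: card_cartesian_product)
  finally show ?thesis .
qed

section \<open>Pyramids over the remaining facets\<close>

lemma ex_first_witness_choice: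
  assumes "finite W" and ex: "\<And>x. x \<in> X \<Longrightarrow> \<exists>w\<in>W. R x w"
  obtains f where "\<And>x. x \<in> X \<Longrightarrow> f x \<in> W \<and> R x (f x)"
    and "\<And>x y. x \<in> X \<Longrightarrow> y \<in> X \<Longrightarrow> f x = f y \<or> \<not> R y (f x) \<or> \<not> R x (f y)"
proof -
  obtain en where en: "bij_betw en {0..<card W} W"
    using ex_bij_betw_nat_finite[OF assms(1)] by blast
  define k where "k x = (LEAST j. j < card W \<and> R x (en j))" for x
  have k: "k x < card W \<and> R x (en (k x))" if x: "x \<in> X" for x
  proof -
    obtain w where "w \<in> W" "R x w"
      using ex[OF x] by blast
    moreover have "w \<in> en ` {0..<card W}"
      using en \<open>w \<in> W\<close> by (simp add: bij_betw_def)
    ultimately obtain j where "j < card W" "R x (en j)"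
      by auto
    then show ?thesis
      using LeastI[of "\<lambda>j. j < card W \<and> R x (en j)" j] unfolding k_def by blast
  qed
  have first: "\<not> R y (en (k x))" if x: "x \<in> X" and less: "k x < k y" for x y
  proof
    assume "R y (en (k x))"
    then have "k y \<le> k x"
      using k[OF x] unfolding k_def[of y] by (intro Least_le) simp
    then show False
      using less by simp
  qed
  show ?thesis
  proof (rule that[of "en \<circ> k"])
    show "(en \<circ> k) x \<in> W \<and> R x ((en \<circ> k) x)" if "x \<in> X" for x
      using k[OF that] bij_betw_apply[OF en] by simp
    show "(en \<circ> k) x = (en \<circ> k) y \<or> \<not> R y ((en \<circ> k) x) \<or> \<not> R x ((en \<circ> k) y)"
      if "x \<in> X" "y \<in> X" for x y
      using first[OF that(1)] first[OF that(2)] by (cases "k x" "k y" rule: linorder_cases) auto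
  qed
qed

lemma measure_add_sum_le:
  assumes I: "finite I" and meas: "P \<in> lmeasurable" "\<And>i. i \<in> I \<Longrightarrow> A i \<in> lmeasurable"
    and neg: "\<And>i. i \<in> I \<Longrightarrow> negligible (P \<inter> A i)"
    and pw: "pairwise (\<lambda>i j. negligible (A i \<inter> A j)) I"
    and sub: "P \<union> (\<Union>i\<in>I. A i) \<subseteq> S" and S: "S \<in> lmeasurable"
  shows "measure lebesgue P + (\<Sum>i\<in>I. measure lebesgue (A i)) \<le> measure lebesgue S"
proof -
  let ?U = "\<Union>i\<in>I. A i"
  have U: "?U \<in> lmeasurable"
    using I meas(2) by (rule fmeasurable.finite_UN)
  have "negligible (\<Union>i\<in>I. P \<inter> A i)"
    by (rule negligible_Union) (use I neg in auto)
  then have "negligible (P \<inter> ?U)"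
    by (simp only: Int_UN_distrib)
  then have "measure lebesgue (P \<union> ?U) = measure lebesgue P + measure lebesgue ?U"
    using measure_Un3[OF meas(1) U] by (simp add: negligible_imp_measure0)
  also have "measure lebesgue ?U = (\<Sum>i\<in>I. measure lebesgue (A i))"
    using I meas(2) pw by (rule measure_negligible_finite_Union_image)
  moreover have "measure lebesgue (P \<union> ?U) \<le> measure lebesgue S"
    using sub fmeasurableD[OF fmeasurable.Un[OF meas(1) U]] S by (rule measure_mono_fmeasurable)
  ultimately show ?thesis
    by linarith
qed

lemma negligible_Int_if_separated:
  fixes a :: "'a::euclidean_space"
  assumes "a \<noteq> 0" "S \<subseteq> {x. a \<bullet> x \<le> b}" "T \<subseteq> {x. a \<bullet> x \<ge> b}"
  shows "negligible (S \<inter> T)"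
proof (rule negligible_subset)
  show "negligible {x. a \<bullet> x = b}"
    using assms(1) by (simp add: negligible_hyperplane)
  show "S \<inter> T \<subseteq> {x. a \<bullet> x = b}"
    using assms(2,3) by fastforce
qed

definition exposing_hyperplane :: "'a::real_inner set \<Rightarrow> 'a set \<Rightarrow> 'a \<Rightarrow> real \<Rightarrow> bool"
  where "exposing_hyperplane P F a b \<longleftrightarrow>
    a \<noteq> 0 \<and> P \<subseteq> {x. a \<bullet> x \<le> b} \<and> F = P \<inter> {x. a \<bullet> x = b}"

lemma polytope_facet_hyperplanes:
  fixes P :: "'a::euclidean_space set"
  assumes "polytope P"
  obtains a b where "\<And>F. F facet_of P \<Longrightarrow> exposing_hyperplane P F (a F) (b F)"
proof -
  have "\<forall>F. \<exists>ab. F facet_of P \<longrightarrow> exposing_hyperplane P F (fst ab) (snd ab)"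
    using facet_of_polyhedron[OF polytope_imp_polyhedron[OF assms]]
    unfolding exposing_hyperplane_def by (metis fst_conv snd_conv)
  then obtain ab where "\<And>F. F facet_of P \<Longrightarrow> exposing_hyperplane P F (fst (ab F)) (snd (ab F))"
    by metis
  then show ?thesis
    by (rule that)
qed

lemma convex_hull_insert_affine_bounds:
  fixes F :: "'a::real_inner set"
  assumes F: "convex F" "F \<noteq> {}" "F \<subseteq> {x. a \<bullet> x = b}" "F \<subseteq> {x. a' \<bullet> x \<le> b'}"
    and y: "y \<in> convex hull (insert v F)"
  obtains s where "a \<bullet> y - b = s * (a \<bullet> v - b)" "a' \<bullet> y - b' \<le> s * (a' \<bullet> v - b')"
proof -
  obtain s t f where st: "0 \<le> t" "s + t = 1" "f \<in> F" "y = s *\<^sub>R v + t *\<^sub>R f"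
    using y unfolding convex_hull_insert[OF F(2)] convex_hull_eq[THEN iffD2, OF F(1)] by blast
  show ?thesis
  proof (rule that[of s])
    have t: "t = 1 - s"
      using st(2) by simp
    have "a \<bullet> f = b"
      using st(3) F(3) by auto
    then show "a \<bullet> y - b = s * (a \<bullet> v - b)"
      by (simp add: st(4) t inner_add_right algebra_simps)
    have "t * (a' \<bullet> f) \<le> t * b'"
      using st(1,3) F(4) by (auto intro: mult_left_mono)
    then show "a' \<bullet> y - b' \<le> s * (a' \<bullet> v - b')"
      by (simp add: st(4) t inner_add_right algebra_simps)
  qed
qed

lemma negligible_Int_pyramids_common_apex:
  fixes P :: "'a::euclidean_space set"
  assumes P: "convex P" and F: "exposing_hyperplane P F aF bF" "F \<noteq> {}"
    and G: "exposing_hyperplane P G aG bG" "G \<noteq> {}" and "F \<noteq> G"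
    and v: "aF \<bullet> v > bF" "aG \<bullet> v > bG"
  shows "negligible (convex hull (insert v F) \<inter> convex hull (insert v G))"
proof -
  define \<alpha> where "\<alpha> = aF \<bullet> v - bF"
  define \<beta> where "\<beta> = aG \<bullet> v - bG"
  define c where "c = \<beta> *\<^sub>R aF - \<alpha> *\<^sub>R aG"
  define e where "e = \<beta> * bF - \<alpha> * bG"
  have pos: "\<alpha> > 0" "\<beta> > 0"
    using v by (simp_all add: \<alpha>_def \<beta>_def)
  have c_eq: "c \<bullet> x - e = \<beta> * (aF \<bullet> x - bF) - \<alpha> * (aG \<bullet> x - bG)" for x
    by (simp add: c_def e_def inner_diff_left algebra_simps)
  have "c \<noteq> 0"
  proof
    assume "c = 0"
    then have "e = 0"
      using c_eq[of v] by (simp add: \<alpha>_def \<beta>_def)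
    then have "aF \<bullet> x = bF \<longleftrightarrow> aG \<bullet> x = bG" for x
      using c_eq[of x] \<open>c = 0\<close> pos by (auto simp: algebra_simps)
    then have "F = G"
      using F(1) G(1) by (auto simp: exposing_hyperplane_def)
    with \<open>F \<noteq> G\<close> show False ..
  qed
  have convex: "convex F" "convex G"
    using F(1) G(1) P by (auto simp: exposing_hyperplane_def intro!: convex_Int convex_hyperplane)
  \<comment> \<open>\<open>c \<bullet> x = e\<close>: the heights of \<open>x\<close> over the two facet hyperplanes are the same
    fraction of those of \<open>v\<close>\<close>
  have "convex hull (insert v F) \<inter> convex hull (insert v G) \<subseteq> {x. c \<bullet> x = e}"
  proof
    fix y assume y: "y \<in> convex hull (insert v F) \<inter> convex hull (insert v G)"
    obtain s where s: "aF \<bullet> y - bF = s * \<alpha>" "aG \<bullet> y - bG \<le> s * \<beta>"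
      using convex_hull_insert_affine_bounds[OF convex(1) F(2), of aF bF aG bG y v] y F(1) G(1)
      unfolding \<alpha>_def \<beta>_def exposing_hyperplane_def by blast
    obtain t where t: "aG \<bullet> y - bG = t * \<beta>" "aF \<bullet> y - bF \<le> t * \<alpha>"
      using convex_hull_insert_affine_bounds[OF convex(2) G(2), of aG bG aF bF y v] y F(1) G(1)
      unfolding \<alpha>_def \<beta>_def exposing_hyperplane_def by blast
    have "s = t"
      using s t pos by (metis antisym mult_right_le_imp_le)
    then show "y \<in> {x. c \<bullet> x = e}"
      using c_eq[of y] s(1) t(1) by simp
  qed
  then show ?thesis
    using negligible_hyperplane[of c e] \<open>c \<noteq> 0\<close> negligible_subset by blast
qed

lemma negligible_Int_pyramids:
  fixes P :: "'a::euclidean_space set"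
  assumes P: "convex P" and F: "exposing_hyperplane P F aF bF" "F \<noteq> {}"
    and G: "exposing_hyperplane P G aG bG" "G \<noteq> {}" and "F \<noteq> G"
    and v: "aF \<bullet> v > bF" and w: "aG \<bullet> w > bG"
    and first: "v = w \<or> aG \<bullet> v \<le> bG \<or> aF \<bullet> w \<le> bF"
  shows "negligible (convex hull (insert v F) \<inter> convex hull (insert w G))"
proof -
  have pyramid_le: "convex hull (insert u H) \<subseteq> {x. a \<bullet> x \<le> b}"
    if "exposing_hyperplane P H a' b'" "exposing_hyperplane P K a b" "a \<bullet> u \<le> b" for H K u a b a' b'
    using that by (intro hull_minimal) (auto simp: exposing_hyperplane_def convex_halfspace_le)
  have pyramid_ge: "convex hull (insert u H) \<subseteq> {x. a \<bullet> x \<ge> b}"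
    if "exposing_hyperplane P H a b" "a \<bullet> u \<ge> b" for H u a b
    using that by (intro hull_minimal) (auto simp: exposing_hyperplane_def convex_halfspace_ge)
  consider "v = w" | "aG \<bullet> v \<le> bG" | "aF \<bullet> w \<le> bF"
    using first by blast
  then show ?thesis
  proof cases
    case 1
    then show ?thesis
      using negligible_Int_pyramids_common_apex[OF P F G \<open>F \<noteq> G\<close> v] w by simp
  next
    case 2
    then show ?thesis
      using G(1) pyramid_le[OF F(1) G(1) 2] pyramid_ge[OF G(1) less_imp_le[OF w]]
      by (intro negligible_Int_if_separated) (auto simp: exposing_hyperplane_def)
  next
    case 3
    then have "negligible (convex hull (insert w G) \<inter> convex hull (insert v F))"
      using F(1) pyramid_le[OF G(1) F(1) 3] pyramid_ge[OF F(1) less_imp_le[OF v]]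
      by (intro negligible_Int_if_separated) (auto simp: exposing_hyperplane_def)
    then show ?thesis
      by (simp add: Int_commute)
  qed
qed

lemma zero_one_facet_pyramid:
  fixes P :: "(real^'n::finite) set"
  assumes V: "V \<subseteq> cube01" "P = convex hull V" and full: "aff_dim P = CARD('n)"
    and F: "F facet_of P" "exposing_hyperplane P F a b" and w: "w \<in> cube01" "a \<bullet> w > b"
  shows "convex hull (insert w F) \<in> lmeasurable"
    and "convex hull (insert w F) \<subseteq> cbox 0 1"
    and "1 / fact CARD('n) \<le> measure lebesgue (convex hull (insert w F))"
    and "negligible (P \<inter> convex hull (insert w F))"
proof -
  have finV: "finite V"
    using V(1) finite_cube01 by (rule finite_subset)
  have "polytope P"
    using V(2) finV by (auto simp: polytope_def)
  then have "polytope F"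
    using F(1) by (blast intro: face_of_polytope_polytope facet_of_imp_face_of)
  then show "convex hull (insert w F) \<in> lmeasurable"
    by (intro lmeasurable_compact compact_convex_hull compact_insert polytope_imp_compact)
  have "P \<subseteq> cbox 0 1"
    using V zero_one_polytope_subset_unit_cube by (auto simp: zero_one_polytope_def)
  then show "convex hull (insert w F) \<subseteq> cbox 0 1"
    using facet_of_imp_subset[OF F(1)] w(1) cube01_subset_unit_cube
    by (intro hull_minimal) (auto simp: convex_box)
  have "affine hull F \<subseteq> {x. a \<bullet> x = b}"
    using F(2) by (intro hull_minimal) (auto simp: exposing_hyperplane_def affine_hyperplane)
  then have "w \<notin> affine hull F"
    using w(2) by auto
  moreover have "aff_dim F = int CARD('n) - 1"
    using F(1) full by (simp add: facet_of_def)
  ultimately show "1 / fact CARD('n) \<le> measure lebesgue (convex hull (insert w F))"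
    using finV V w(1) cube01_subset_integer_points facet_of_imp_face_of[OF F(1)]
    by (intro lattice_pyramid_measure_ge[of V]) auto
  have "convex hull (insert w F) \<subseteq> {x. a \<bullet> x \<ge> b}"
    using F(2) w(2) by (intro hull_minimal) (auto simp: exposing_hyperplane_def convex_halfspace_ge)
  then show "negligible (P \<inter> convex hull (insert w F))"
    using F(2) by (intro negligible_Int_if_separated) (auto simp: exposing_hyperplane_def)
qed

lemma card_facets_off_cube_facets_le:
  fixes P :: "(real^'n::finite) set"
  assumes P: "zero_one_polytope P" and full: "aff_dim P = CARD('n)"
  shows "real (card {F. F facet_of P \<and> \<not> in_cube_facet F})
           \<le> fact CARD('n) * (1 - measure lebesgue P)"
proof -
  obtain V where V: "V \<subseteq> cube01" "P = convex hull V"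
    using P unfolding zero_one_polytope_def by blast
  obtain a b where ab: "\<And>F. F facet_of P \<Longrightarrow> exposing_hyperplane P F (a F) (b F)"
    using polytope_facet_hyperplanes[OF zero_one_polytope_imp_polytope[OF P]] by blast
  define T where "T = {F. F facet_of P \<and> \<not> in_cube_facet F}"
  have facet: "F facet_of P" "exposing_hyperplane P F (a F) (b F)" if "F \<in> T" for F
    using that ab by (auto simp: T_def)
  have "\<exists>w\<in>cube01. a F \<bullet> w > b F" if "F \<in> T" for F
    using facet[OF that] V that facet_of_imp_face_of
    by (intro ex_cube01_beyond_face[of V F]) (auto simp: exposing_hyperplane_def T_def)
  then obtain apex where apex: "\<And>F. F \<in> T \<Longrightarrow> apex F \<in> cube01 \<and> a F \<bullet> apex F > b F"
    and first: "\<And>F G. F \<in> T \<Longrightarrow> G \<in> T \<Longrightarrow>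
                  apex F = apex G \<or> \<not> a G \<bullet> apex F > b G \<or> \<not> a F \<bullet> apex G > b F"
    using ex_first_witness_choice[OF finite_cube01, of T "\<lambda>F w. a F \<bullet> w > b F"] by blast
  define Q where "Q F = convex hull (insert (apex F) F)" for F
  note pyramid = zero_one_facet_pyramid[OF V full facet apex[THEN conjunct1] apex[THEN conjunct2],
      folded Q_def]
  have "pairwise (\<lambda>F G. negligible (Q F \<inter> Q G)) T"
    unfolding pairwise_def Q_def
    using facet first apex zero_one_polytope_imp_polytope[OF P]
    by (auto intro!: negligible_Int_pyramids polytope_imp_convex simp: not_less facet_of_def)
  moreover have "finite T"
    using finite_polytope_facets[OF zero_one_polytope_imp_polytope[OF P]] by (simp add: T_def)
  ultimately have "measure lebesgue P + (\<Sum>F\<in>T. measure lebesgue (Q F))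
      \<le> measure lebesgue (cbox 0 (1::real^'n))"
    using pyramid zero_one_polytope_subset_unit_cube[OF P]
      lmeasurable_compact[OF polytope_imp_compact[OF zero_one_polytope_imp_polytope[OF P]]]
    by (intro measure_add_sum_le) auto
  then have sum_le: "(\<Sum>F\<in>T. measure lebesgue (Q F)) \<le> 1 - measure lebesgue P"
    by (simp add: measure_unit_cube)
  have "real (card T) * (1 / fact CARD('n)) \<le> (\<Sum>F\<in>T. measure lebesgue (Q F))"
    using pyramid(3) by (rule sum_bounded_below)
  then have "real (card T) \<le> fact CARD('n) * (\<Sum>F\<in>T. measure lebesgue (Q F))"
    by (simp add: field_simps)
  also have "\<dots> \<le> fact CARD('n) * (1 - measure lebesgue P)"
    using sum_le by (intro mult_left_mono) auto
  finally show ?thesis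
    by (simp add: T_def)
qed

theorem mainTheorem4:
  fixes P :: "(real ^ 'n) set"
  assumes "zero_one_polytope P"
    and "aff_dim P = int CARD('n)"
  shows "real (card {F. F facet_of P})
           \<le> 2 * real CARD('n) + fact CARD('n) * (1 - measure lebesgue P)"
proof -
  let ?A = "{F. F facet_of P \<and> in_cube_facet F}"
  let ?B = "{F. F facet_of P \<and> \<not> in_cube_facet F}"
  have split: "{F. F facet_of P} = ?A \<union> ?B"
    by auto
  have "card {F. F facet_of P} \<le> card ?A + card ?B"
    unfolding split by (rule card_Un_le)
  moreover have "card ?A \<le> 2 * CARD('n)"
    using assms zero_one_polytope_imp_polytope zero_one_polytope_subset_unit_cube
    by (intro card_facets_in_cube_facets_le) auto
  ultimately have "real (card {F. F facet_of P}) \<le> real (2 * CARD('n) + card ?B)"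
    by (intro of_nat_mono) simp
  then show ?thesis
    using card_facets_off_cube_facets_le[OF assms] by simp
qed

end
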